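(* Let $n\ge3$ and $2\le s\le n-1$. For every $I\subseteq\{1,\dots,n\}$ with $|I|=s$ and $n\in I$, the groups $U_I(K)$ and $E_\infty(\mathbb S_{CI})$ are contained in $E_\infty(\mathbb S_{n-1})$ (viewed inside $(1+\mathfrak p_n)^*=\mathrm{GL}_\infty(\mathbb S_{n-1})$). Consequently $\widetilde{\mathcal E}_{n,s}\subseteq E_\infty(\mathbb S_{n-1})$.
   Context: $K$ is a field, $\mathbb N=\{0,1,\dots\}$. $\mathbb S_n$: $K$-algebra generated by $x_1,\dots,x_n,y_1,\dots,y_n$ with relations $y_ix_i=1$, $[x_i,y_j]=[x_i,x_j]=[y_i,y_j]=0$ ($i\ne j$). $E_{st}(i):=x_i^sy_i^t-x_i^{s+1}y_i^{t+1}$, $e_i:=E_{00}(i)$, $e_I:=\prod_{i\in I}e_i$, $E_{\alpha\beta}(I):=\prod_{i\in I}E_{\alpha_i\beta_i}(i)$ for $\alpha,\beta\in\mathbb N^I$. $\mathfrak p_n$ is the ideal of $\mathbb S_n$ generated by $e_n$ and $(1+\mathfrak p_n)^*$ the group of units in $1+\mathfrak p_n$. $\mathbb S_{n-1}$ = subalgebra generated by $x_k,y_k$, $k<n$; $\mathrm{GL}_\infty(\mathbb S_{n-1})$ is identified with $(1+\mathfrak p_n)^*$ via $(a_{kl})\mapsto1+\sum(a_{kl}-\delta_{kl})E_{kl}(n)$; $E_\infty(\mathbb S_{n-1})$ is the subgroup generated by elementary matrices, i.e. by the elements $1+aE_{kl}(n)$, $a\in\mathbb S_{n-1}$, $k\ne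 l$. $\mu_I(\lambda):=\lambda e_I+1-e_I$, $U_I(K):=\{\mu_I(\lambda):\lambda\in K^*\}$; $CI$ is the complement of $I$, $\mathbb S_{CI}$ the subalgebra generated by $x_k,y_k$, $k\in CI$ ($=K$ if $CI=\emptyset$); $E_\infty(\mathbb S_{CI})$ the subgroup of $\mathbb S_n^*$ generated by $1+aE_{\alpha\beta}(I)$, $a\in\mathbb S_{CI}$, $\alpha\ne\beta\in\mathbb N^I$. $\widetilde{\mathcal E}_{n,s}$ is the set of products, in a fixed order over all $I$ with $|I|=s$ and $n\in I$, of elements of $U_I(K)E_\infty(\mathbb S_{CI})$. *)

theory Defs
  imports Main
begin

text \<open>Concrete model of the Jacobian algebra S_n: the faithful representation of
  S_n by linear operators on the space of all functions N^N -> K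
  (x_i is the shift raising the i-th exponent, y_i its left inverse).\<close>

type_synonym 'a sop = "((nat \<Rightarrow> nat) \<Rightarrow> 'a) \<Rightarrow> ((nat \<Rightarrow> nat) \<Rightarrow> 'a)"

definition Xop :: "nat \<Rightarrow> 'a::field sop" where
  "Xop i = (\<lambda>f \<alpha>. if 1 \<le> \<alpha> i then f (\<alpha>(i := \<alpha> i - 1)) else 0)"

definition Yop :: "nat \<Rightarrow> 'a::field sop" where
  "Yop i = (\<lambda>f \<alpha>. f (\<alpha>(i := \<alpha> i + 1)))"

definition opadd :: "'a::field sop \<Rightarrow> 'a sop \<Rightarrow> 'a sop" where
  "opadd a b = (\<lambda>f \<alpha>. a f \<alpha> + b f \<alpha>)"

definition opsub :: "'a::field sop \<Rightarrow> 'a sop \<Rightarrow> 'a sop" where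
  "opsub a b = (\<lambda>f \<alpha>. a f \<alpha> - b f \<alpha>)"

definition opsmult :: "'a::field \<Rightarrow> 'a sop \<Rightarrow> 'a sop" where
  "opsmult c a = (\<lambda>f \<alpha>. c * a f \<alpha>)"

inductive_set salg :: "nat set \<Rightarrow> 'a::field sop set" for J where
  one: "id \<in> salg J"
| genx: "k \<in> J \<Longrightarrow> Xop k \<in> salg J"
| geny: "k \<in> J \<Longrightarrow> Yop k \<in> salg J"
| add: "a \<in> salg J \<Longrightarrow> b \<in> salg J \<Longrightarrow> opadd a b \<in> salg J"
| mult: "a \<in> salg J \<Longrightarrow> b \<in> salg J \<Longrightarrow> a \<circ> b \<in> salg J"
| smult: "a \<in> salg J \<Longrightarrow> opsmult c a \<in> salg J"

text \<open>Subgroup of the group of units generated by a set of units (the generators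
  are bijective operators; inv is the functional inverse).\<close>
inductive_set gen_grp :: "'a sop set \<Rightarrow> 'a sop set" for G where
  one: "id \<in> gen_grp G"
| left: "g \<in> G \<Longrightarrow> h \<in> gen_grp G \<Longrightarrow> g \<circ> h \<in> gen_grp G"
| left_inv: "g \<in> G \<Longrightarrow> h \<in> gen_grp G \<Longrightarrow> inv g \<circ> h \<in> gen_grp G"

definition Est :: "nat \<Rightarrow> nat \<Rightarrow> nat \<Rightarrow> 'a::field sop" where
  "Est s t i = opsub ((Xop i ^^ s) \<circ> (Yop i ^^ t)) ((Xop i ^^ Suc s) \<circ> (Yop i ^^ Suc t))"

definition eop :: "nat \<Rightarrow> 'a::field sop" where
  "eop i = Est 0 0 i"

text \<open>Products over a finite index set I (factors commute; taken in increasing order).\<close>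
definition EI :: "(nat \<Rightarrow> nat) \<Rightarrow> (nat \<Rightarrow> nat) \<Rightarrow> nat set \<Rightarrow> 'a::field sop" where
  "EI \<alpha> \<beta> I = foldr (\<circ>) (map (\<lambda>i. Est (\<alpha> i) (\<beta> i) i) (sorted_list_of_set I)) id"

definition eI :: "nat set \<Rightarrow> 'a::field sop" where
  "eI I = foldr (\<circ>) (map (\<lambda>i. eop i) (sorted_list_of_set I)) id"

definition muI :: "nat set \<Rightarrow> 'a::field \<Rightarrow> 'a sop" where
  "muI I c = opadd (opsmult c (eI I)) (opsub id (eI I))"

definition UI :: "nat set \<Rightarrow> 'a::field sop set" where
  "UI I = {muI I c | c. c \<noteq> 0}"

text \<open>E_infinity(S_{n-1}) inside (1+p_n)^*: generated by 1 + a E_{kl}(n), a in S_{n-1}, k <> l.\<close>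
definition Einf_n :: "nat \<Rightarrow> 'a::field sop set" where
  "Einf_n n = gen_grp {opadd id (a \<circ> Est k l n) | a k l. a \<in> salg {1..<n} \<and> k \<noteq> l}"

text \<open>E_infinity(S_{CI}): generated by 1 + a E_{alpha beta}(I), a in S_{CI}, alpha <> beta in N^I.\<close>
definition Einf_C :: "nat \<Rightarrow> nat set \<Rightarrow> 'a::field sop set" where
  "Einf_C n I = gen_grp {opadd id (a \<circ> EI \<alpha> \<beta> I) | a \<alpha> \<beta>.
      a \<in> salg ({1..n} - I) \<and> (\<exists>i\<in>I. \<alpha> i \<noteq> \<beta> i)}"

text \<open>tilde E_{n,s} for a fixed ordering Is of the sets I (|I| = s, n in I):
  products, in the order of Is, of elements of U_I(K) E_infinity(S_{CI}).\<close>
definition tildeE :: "nat \<Rightarrow> nat set list \<Rightarrow> 'a::field sop set" where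
  "tildeE n Is = {foldr (\<circ>) (map g Is) id | g.
      \<forall>I\<in>set Is. g I \<in> {u \<circ> v | u v. u \<in> UI I \<and> v \<in> Einf_C n I}}"

end

theory Submission
  imports Defs
begin

text \<open>Identify (1 + p_n)^* with GL_oo(S_{n-1}) through the matrix units E_kl(n) and compute in the
  ring of linear operators. For a generator 1 + a E_{\<alpha>\<beta>}(I) of E_oo(S_CI) write
  E_{\<alpha>\<beta>}(I) = E_{\<alpha>\<beta>}(I') E_{\<alpha>_n \<beta>_n}(n) with I' = I - {n}: if \<alpha>_n \<noteq> \<beta>_n it is an elementary
  matrix over S_{n-1}, otherwise it is the diagonal matrix 1 + B E_mm(n) with B = a E_{\<alpha>\<beta>}(I'), which
  is the commutator of e_mk(B) and e_km(E_{\<beta>\<beta>}(I')). For \<mu>_I(\<lambda>) pick i \<in> I - {n}, put J = I - {i, n}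
  and u = \<mu>_J(\<lambda>); then \<mu>_I(\<lambda>) = 1 + (u - 1) e_i E_00(n) with e_i = 1 - x_i y_i, which is the commutator
  of diag(u, u^-1) (elementary by Whitehead's lemma) with the elementary matrix [[x_i, e_i], [0, y_i]].\<close>

section \<open>Identities between elementary matrices\<close>

text \<open>P a b plays the matrix unit E_ab(n), R the coefficient ring S_{n-1}, and G a multiplicatively
  closed set containing the elementary matrices 1 + r E_kl(n).\<close>

locale elementary_subgroup =
  fixes P :: "nat \<Rightarrow> nat \<Rightarrow> 'r::ring_1" and R G :: "'r set"
  assumes unit_times_unit: "P a b * P c d = (if b = c then P a d else 0)"
    and unit_commute: "r \<in> R \<Longrightarrow> P a b * r = r * P a b"
    and one_in_R: "1 \<in> R"
    and diff_in_R: "r \<in> R \<Longrightarrow> s \<in> R \<Longrightarrow> r - s \<in> R"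
    and elementary_in_G: "r \<in> R \<Longrightarrow> k \<noteq> l \<Longrightarrow> 1 + r * P k l \<in> G"
    and times_in_G: "g \<in> G \<Longrightarrow> h \<in> G \<Longrightarrow> g * h \<in> G"
begin

lemma uminus_in_R: "r \<in> R \<Longrightarrow> - r \<in> R"
  using diff_in_R[OF diff_in_R[OF one_in_R one_in_R]] by simp

lemma unit_times_unit_left: "P a b * (P c d * X) = (if b = c then P a d * X else 0)"
  by (simp add: unit_times_unit flip: mult.assoc)

lemma unit_commute_left: "r \<in> R \<Longrightarrow> P a b * (r * X) = r * (P a b * X)"
  by (simp add: unit_commute flip: mult.assoc)

lemma diagonal_in_G:
  assumes "u \<in> R" "u' \<in> R" "u * u' = 1" "u' * u = 1" "k \<noteq> l"
  shows "1 + (u - 1) * P k k + (u' - 1) * P l l \<in> G"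
proof -
  have inverse_left: "u * (u' * X) = X" "u' * (u * X) = X" for X
    using assms(3,4) by (simp_all flip: mult.assoc)
  have "(1 + u * P k l) * (1 + (- u') * P l k) * (1 + u * P k l)
      * (1 + (- 1) * P k l) * (1 + 1 * P l k) * (1 + (- 1) * P k l)
    = 1 + (u - 1) * P k k + (u' - 1) * P l l"
    using assms(5)
    by (simp add: algebra_simps unit_times_unit unit_times_unit_left assms(3,4) inverse_left
        unit_commute[OF assms(1)] unit_commute[OF assms(2)]
        unit_commute_left[OF assms(1)] unit_commute_left[OF assms(2)])
  moreover have "(1 + u * P k l) * (1 + (- u') * P l k) * (1 + u * P k l)
      * (1 + (- 1) * P k l) * (1 + 1 * P l k) * (1 + (- 1) * P k l) \<in> G"
    using assms by (intro times_in_G elementary_in_G uminus_in_R one_in_R) auto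
  ultimately show ?thesis by simp
qed

lemma one_sided_inverse_block_in_G:
  assumes "x \<in> R" "y \<in> R" "y * x = 1" "a \<noteq> b"
  shows "1 + (x - 1) * P a a + (1 - x * y) * P a b + (y - 1) * P b b \<in> G"
proof -
  have inverse_left: "y * (x * X) = X" for X
    using assms(3) by (simp flip: mult.assoc)
  have "(1 + (1 - x) * P a b) * (1 + (- 1) * P b a) * (1 + (1 - y) * P a b) * (1 + x * P b a)
    = 1 + (x - 1) * P a a + (1 - x * y) * P a b + (y - 1) * P b b"
    using assms(4)
    by (simp add: algebra_simps unit_times_unit unit_times_unit_left assms(3) inverse_left
        unit_commute[OF assms(1)] unit_commute[OF assms(2)]
        unit_commute_left[OF assms(1)] unit_commute_left[OF assms(2)])
  moreover have "(1 + (1 - x) * P a b) * (1 + (- 1) * P b a) * (1 + (1 - y) * P a b) * (1 + x * P b a) \<in> G"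
    using assms by (intro times_in_G elementary_in_G uminus_in_R diff_in_R one_in_R) auto
  ultimately show ?thesis by simp
qed

text \<open>The commutator of ?D = diag(u, u') on the indices a, m with the block ?M of the previous
  lemma; ?M' is the inverse of ?M, namely the same block with a and b swapped.\<close>

lemma corner_in_G:
  assumes R: "x \<in> R" "y \<in> R" "u \<in> R" "u' \<in> R"
    and "y * x = 1" "u * u' = 1" "u' * u = 1"
    and "u * x = x * u" "u * y = y * u" "u' * x = x * u'" "u' * y = y * u'"
    and "a \<noteq> b" "a \<noteq> m" "b \<noteq> m"
  shows "1 + (u - 1) * (1 - x * y) * P a a \<in> G"
proof -
  have inverse_left: "y * (x * X) = X" "u * (u' * X) = X" "u' * (u * X) = X" for X
    using assms(5-7) by (simp_all flip: mult.assoc)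
  have commute_left: "x * (u * X) = u * (x * X)" "y * (u * X) = u * (y * X)"
    "x * (u' * X) = u' * (x * X)" "y * (u' * X) = u' * (y * X)" for X
    using assms(8-11) by (simp_all flip: mult.assoc)
  let ?D = "1 + (u - 1) * P a a + (u' - 1) * P m m"
  let ?D' = "1 + (u' - 1) * P a a + (u - 1) * P m m"
  let ?M = "1 + (x - 1) * P a a + (1 - x * y) * P a b + (y - 1) * P b b"
  let ?M' = "1 + (x - 1) * P b b + (1 - x * y) * P b a + (y - 1) * P a a"
  have "?D * ?M * ?D' * ?M' = 1 + (u - 1) * (1 - x * y) * P a a"
    using assms(12-14)
    by (simp add: algebra_simps unit_times_unit unit_times_unit_left assms(5-11) inverse_left
        commute_left unit_commute[OF R(1)] unit_commute[OF R(2)] unit_commute[OF R(3)]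
        unit_commute[OF R(4)] unit_commute_left[OF R(1)] unit_commute_left[OF R(2)]
        unit_commute_left[OF R(3)] unit_commute_left[OF R(4)])
  moreover have "?D * ?M * ?D' * ?M' \<in> G"
    using assms by (intro times_in_G diagonal_in_G one_sided_inverse_block_in_G) auto
  ultimately show ?thesis by simp
qed

lemma nilpotent_corner_in_G:
  assumes "B \<in> R" "V \<in> R" "B * V = B" "V * B = 0" "k \<noteq> m"
  shows "1 + B * P m m \<in> G"
proof -
  have BB: "B * B = 0"
    by (metis assms(3,4) mult.assoc mult_zero_right)
  have products_left: "B * (V * X) = B * X" "V * (B * X) = 0" "B * (B * X) = 0" for X
    using assms(3,4) BB by (simp_all flip: mult.assoc)
  have "(1 + B * P m k) * (1 + V * P k m) * (1 + (- B) * P m k) * (1 + (- V) * P k m) = 1 + B * P m m"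
    using assms(5)
    by (simp add: algebra_simps unit_times_unit unit_times_unit_left assms(3,4) BB products_left
        unit_commute[OF assms(1)] unit_commute[OF assms(2)]
        unit_commute_left[OF assms(1)] unit_commute_left[OF assms(2)])
  moreover have "(1 + B * P m k) * (1 + V * P k m) * (1 + (- B) * P m k) * (1 + (- V) * P k m) \<in> G"
    using assms by (intro times_in_G elementary_in_G uminus_in_R) auto
  ultimately show ?thesis by simp
qed

end

lemma gen_grp_comp: "g \<in> gen_grp G \<Longrightarrow> h \<in> gen_grp G \<Longrightarrow> g \<circ> h \<in> gen_grp G"
  by (induction rule: gen_grp.induct) (auto simp: comp_assoc intro: gen_grp.intros)

lemma gen_grp_generator: "g \<in> G \<Longrightarrow> g \<in> gen_grp G"
  using gen_grp.left[OF _ gen_grp.one] by fastforce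

lemma gen_grp_foldr_comp:
  "(\<And>x. x \<in> set L \<Longrightarrow> g x \<in> gen_grp G) \<Longrightarrow> foldr (\<circ>) (map g L) id \<in> gen_grp G"
  by (induction L) (auto intro: gen_grp.one gen_grp_comp)

lemma gen_grp_subset:
  assumes "\<And>g. g \<in> G \<Longrightarrow> g \<in> gen_grp H \<and> inv g \<in> gen_grp H"
  shows "gen_grp G \<subseteq> gen_grp H"
proof
  fix x assume "x \<in> gen_grp G"
  then show "x \<in> gen_grp H"
    by (induction rule: gen_grp.induct) (use assms in \<open>blast intro: gen_grp.one gen_grp_comp\<close>)+
qed

section \<open>The operators of S_n\<close>

lemma Xop_pow_apply:
  "(Xop i ^^ s) f \<alpha> = (if s \<le> \<alpha> i then f (\<alpha>(i := \<alpha> i - s)) else (0::'a::field))"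
proof (induction s arbitrary: \<alpha>)
  case (Suc s)
  then show ?case by (auto simp: Xop_def fun_upd_def intro!: arg_cong[where f = f])
qed simp

lemma Yop_pow_apply: "(Yop i ^^ t) f \<alpha> = (f (\<alpha>(i := \<alpha> i + t)) :: 'a::field)"
proof (induction t arbitrary: \<alpha>)
  case (Suc t)
  then show ?case by (auto simp: Yop_def fun_upd_def intro!: arg_cong[where f = f])
qed simp

lemma Est_apply: "Est s t i f \<alpha> = (if \<alpha> i = s then f (\<alpha>(i := t)) else (0::'a::field))"
  unfolding Est_def opsub_def comp_def
  by (simp del: funpow.simps add: Xop_pow_apply Yop_pow_apply;
      auto simp: fun_upd_def intro!: arg_cong[where f = f] ext)

lemma EI_list_apply:
  "distinct L \<Longrightarrow> foldr (\<circ>) (map (\<lambda>i. Est (\<alpha> i) (\<beta> i) i) L) id f \<gamma> =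
    (if \<forall>j\<in>set L. \<gamma> j = \<alpha> j then f (\<lambda>j. if j \<in> set L then \<beta> j else \<gamma> j) else (0::'a::field))"
proof (induction L arbitrary: \<gamma>)
  case (Cons a L)
  have "(\<lambda>j. if j \<in> set L then \<beta> j else (\<gamma>(a := \<beta> a)) j) = (\<lambda>j. if j \<in> set (a # L) then \<beta> j else \<gamma> j)"
    by auto
  with Cons show ?case by (auto simp: Est_apply)
qed simp

lemma EI_apply:
  "finite I \<Longrightarrow> EI \<alpha> \<beta> I f \<gamma> =
    (if \<forall>j\<in>I. \<gamma> j = \<alpha> j then f (\<lambda>j. if j \<in> I then \<beta> j else \<gamma> j) else (0::'a::field))"
  unfolding EI_def by (simp add: EI_list_apply)

lemma eI_eq_EI: "eI I = EI (\<lambda>_. 0) (\<lambda>_. 0) I"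
  unfolding eI_def EI_def eop_def ..

lemma eI_apply: "finite I \<Longrightarrow> eI I f \<gamma> = (if \<forall>j\<in>I. \<gamma> j = 0 then f \<gamma> else (0::'a::field))"
  unfolding eI_eq_EI by (auto simp: EI_apply intro!: arg_cong[where f = f])

definition linear_op :: "'a::field sop \<Rightarrow> bool" where
  "linear_op T \<longleftrightarrow> (\<forall>f g. T (\<lambda>\<alpha>. f \<alpha> + g \<alpha>) = (\<lambda>\<alpha>. T f \<alpha> + T g \<alpha>))
     \<and> (\<forall>c f. T (\<lambda>\<alpha>. c * f \<alpha>) = (\<lambda>\<alpha>. c * T f \<alpha>))"

lemma linear_op_id: "linear_op id"
  by (simp add: linear_op_def)

lemma linear_op_zero: "linear_op (\<lambda>f \<alpha>. 0)"
  by (simp add: linear_op_def)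

lemma linear_op_comp: "linear_op a \<Longrightarrow> linear_op b \<Longrightarrow> linear_op (a \<circ> b)"
  by (simp add: linear_op_def)

lemma linear_op_opadd: "linear_op a \<Longrightarrow> linear_op b \<Longrightarrow> linear_op (opadd a b)"
  by (simp add: linear_op_def opadd_def algebra_simps)

lemma linear_op_opsub: "linear_op a \<Longrightarrow> linear_op b \<Longrightarrow> linear_op (opsub a b)"
  by (simp add: linear_op_def opsub_def algebra_simps)

lemma linear_op_opsmult: "linear_op a \<Longrightarrow> linear_op (opsmult c a)"
  by (simp add: linear_op_def opsmult_def algebra_simps)

lemma linear_op_Xop: "linear_op (Xop i)"
  by (auto simp: linear_op_def Xop_def fun_eq_iff)

lemma linear_op_Yop: "linear_op (Yop i)"
  by (auto simp: linear_op_def Yop_def fun_eq_iff)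

lemma linear_op_Est: "linear_op (Est s t i)"
  by (auto simp: linear_op_def Est_apply fun_eq_iff)

lemma linear_op_foldr_comp:
  "(\<And>x. x \<in> set L \<Longrightarrow> linear_op (g x)) \<Longrightarrow> linear_op (foldr (\<circ>) (map g L) id)"
  by (induction L) (auto simp: linear_op_id linear_op_comp)

lemma linear_op_EI: "linear_op (EI \<alpha> \<beta> I)"
  unfolding EI_def by (rule linear_op_foldr_comp) (simp add: linear_op_Est)

lemma linear_op_muI: "linear_op (muI I c)"
  unfolding muI_def eI_eq_EI
  by (intro linear_op_opadd linear_op_opsmult linear_op_opsub linear_op_id linear_op_EI)

lemma linear_op_salg: "a \<in> salg J \<Longrightarrow> linear_op a"
  by (induction rule: salg.induct)
    (use linear_op_id linear_op_comp linear_op_Xop linear_op_Yop linear_op_opadd linear_op_opsmult in blast)+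

lemma linear_op_comp_opadd: "linear_op T \<Longrightarrow> T \<circ> opadd a b = opadd (T \<circ> a) (T \<circ> b)"
  by (auto simp: linear_op_def opadd_def fun_eq_iff)

lemma linear_op_comp_opsmult: "linear_op T \<Longrightarrow> T \<circ> opsmult c a = opsmult c (T \<circ> a)"
  by (auto simp: linear_op_def opsmult_def fun_eq_iff)

lemma opadd_comp: "opadd a b \<circ> T = opadd (a \<circ> T) (b \<circ> T)"
  by (auto simp: opadd_def fun_eq_iff)

lemma opsmult_comp: "opsmult c a \<circ> T = opsmult c (a \<circ> T)"
  by (auto simp: opsmult_def fun_eq_iff)

text \<open>Composition distributes over addition from the left only for linear operators, so these form
  the ring in which the matrix identities are evaluated.\<close>

typedef (overloaded) 'a linop = "{T :: 'a::field sop. linear_op T}"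
  using linear_op_id by blast

setup_lifting type_definition_linop

instantiation linop :: (field) ring_1
begin

lift_definition zero_linop :: "'a linop" is "\<lambda>f \<alpha>. 0" by (rule linear_op_zero)
lift_definition one_linop :: "'a linop" is id by (rule linear_op_id)
lift_definition plus_linop :: "'a linop \<Rightarrow> 'a linop \<Rightarrow> 'a linop" is opadd by (rule linear_op_opadd)
lift_definition minus_linop :: "'a linop \<Rightarrow> 'a linop \<Rightarrow> 'a linop" is opsub by (rule linear_op_opsub)
lift_definition uminus_linop :: "'a linop \<Rightarrow> 'a linop" is "opsmult (-1)" by (rule linear_op_opsmult)
lift_definition times_linop :: "'a linop \<Rightarrow> 'a linop \<Rightarrow> 'a linop" is "(\<circ>)" by (rule linear_op_comp)

instance
proof
  fix a b c :: "'a linop"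
  show "a + b + c = a + (b + c)" by transfer (simp add: opadd_def add.assoc)
  show "a + b = b + a" by transfer (simp add: opadd_def add.commute)
  show "0 + a = a" by transfer (simp add: opadd_def)
  show "- a + a = 0" by transfer (simp add: opadd_def opsmult_def)
  show "a - b = a + - b" by transfer (simp add: opadd_def opsmult_def opsub_def)
  show "a * b * c = a * (b * c)" by transfer (simp add: comp_assoc)
  show "1 * a = a" by transfer simp
  show "a * 1 = a" by transfer simp
  show "(a + b) * c = a * c + b * c" by transfer (simp add: opadd_comp)
  show "a * (b + c) = a * b + a * c" by transfer (simp add: linear_op_comp_opadd)
  show "(0::'a linop) \<noteq> 1"
  proof transfer
    have "(\<lambda>f \<alpha>. 0::'a) (\<lambda>_. 1) undefined \<noteq> id (\<lambda>_. 1) undefined" by simp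
    then show "(\<lambda>f \<alpha>. 0::'a) \<noteq> id" by metis
  qed
qed

end

lemma Rep_linop_one: "Rep_linop 1 = id"
  by transfer simp

lemma Rep_linop_plus: "Rep_linop (a + b) = opadd (Rep_linop a) (Rep_linop b)"
  by transfer simp

lemma Rep_linop_times: "Rep_linop (a * b) = Rep_linop a \<circ> Rep_linop b"
  by transfer simp

lemma Rep_linop_uminus: "Rep_linop (- a) = opsmult (-1) (Rep_linop a)"
  by transfer simp

lemma Rep_linop_Abs_salg: "a \<in> salg J \<Longrightarrow> Rep_linop (Abs_linop a) = a"
  by (simp add: Abs_linop_inverse linear_op_salg)

lemma salg_opsub: "a \<in> salg J \<Longrightarrow> b \<in> salg J \<Longrightarrow> opsub a b \<in> salg J"
proof -
  assume "a \<in> salg J" "b \<in> salg J"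
  then have "opadd a (opsmult (-1) b) \<in> salg J" by (intro salg.add salg.smult)
  moreover have "opadd a (opsmult (-1) b) = opsub a b"
    by (simp add: opadd_def opsmult_def opsub_def fun_eq_iff)
  ultimately show ?thesis by simp
qed

lemma salg_mono: "a \<in> salg J \<Longrightarrow> J \<subseteq> K \<Longrightarrow> a \<in> salg K"
  by (induction rule: salg.induct) (auto intro: salg.intros)

lemma salg_funpow: "a \<in> salg J \<Longrightarrow> a ^^ s \<in> salg J"
  by (induction s) (auto intro: salg.intros)

lemma salg_Est: "i \<in> J \<Longrightarrow> Est s t i \<in> salg J"
  unfolding Est_def by (intro salg_opsub salg.mult salg_funpow salg.genx salg.geny)

lemma salg_foldr_comp:
  "(\<And>x. x \<in> set L \<Longrightarrow> g x \<in> salg J) \<Longrightarrow> foldr (\<circ>) (map g L) id \<in> salg J"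
  by (induction L) (auto intro: salg.intros)

lemma salg_EI: "finite I \<Longrightarrow> I \<subseteq> J \<Longrightarrow> EI \<alpha> \<beta> I \<in> salg J"
  unfolding EI_def by (rule salg_foldr_comp) (auto intro: salg_Est)

lemma salg_muI: "finite I \<Longrightarrow> I \<subseteq> J \<Longrightarrow> muI I c \<in> salg J"
  unfolding muI_def eI_eq_EI by (intro salg.add salg.smult salg_opsub salg.one salg_EI)

lemma salg_commute:
  assumes "linear_op b"
    and "\<And>k. k \<in> J \<Longrightarrow> Xop k \<circ> b = b \<circ> Xop k" "\<And>k. k \<in> J \<Longrightarrow> Yop k \<circ> b = b \<circ> Yop k"
    and "a \<in> salg J"
  shows "a \<circ> b = b \<circ> a"
  using assms(4)
proof (induction rule: salg.induct)
  case (add a a')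
  then show ?case by (simp only: opadd_comp linear_op_comp_opadd[OF assms(1)])
next
  case (mult a a')
  have "a \<circ> a' \<circ> b = a \<circ> (b \<circ> a')" by (simp only: comp_assoc mult.IH(2))
  also have "\<dots> = b \<circ> (a \<circ> a')" by (simp only: comp_assoc[symmetric] mult.IH(1))
  finally show ?case .
next
  case (smult a c)
  then show ?case by (simp only: opsmult_comp linear_op_comp_opsmult[OF assms(1)])
next
  case one show ?case by simp
next
  case (genx k) then show ?case by (rule assms(2))
next
  case (geny k) then show ?case by (rule assms(3))
qed

lemma Xop_Yop_commute:
  assumes "k \<noteq> j"
  shows "Xop k \<circ> Xop j = Xop j \<circ> Xop k" "Xop k \<circ> Yop j = Yop j \<circ> Xop k"
    "Yop k \<circ> Xop j = Xop j \<circ> Yop k" "Yop k \<circ> Yop j = Yop j \<circ> Yop k"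
  using assms by (auto simp: Xop_def Yop_def fun_eq_iff fun_upd_twist)

lemma salg_disjoint_commute:
  assumes "a \<in> salg J" "b \<in> salg K" "J \<inter> K = {}"
  shows "a \<circ> b = b \<circ> a"
proof (rule salg_commute[OF linear_op_salg[OF assms(2)] _ _ assms(1)])
  fix k assume "k \<in> J"
  then have kK: "j \<in> K \<Longrightarrow> j \<noteq> k" for j using assms(3) by blast
  show "Xop k \<circ> b = b \<circ> Xop k"
    by (rule salg_commute[OF linear_op_Xop _ _ assms(2), symmetric])
      (simp_all only: Xop_Yop_commute(1,3)[OF kK])
  show "Yop k \<circ> b = b \<circ> Yop k"
    by (rule salg_commute[OF linear_op_Yop _ _ assms(2), symmetric])
      (simp_all only: Xop_Yop_commute(2,4)[OF kK])
qed

lift_definition lX :: "nat \<Rightarrow> 'a::field linop" is Xop by (rule linear_op_Xop)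
lift_definition lY :: "nat \<Rightarrow> 'a::field linop" is Yop by (rule linear_op_Yop)
lift_definition lE :: "nat \<Rightarrow> nat \<Rightarrow> nat \<Rightarrow> 'a::field linop" is "\<lambda>i k l. Est k l i"
  by (rule linear_op_Est)
lift_definition lEI :: "(nat \<Rightarrow> nat) \<Rightarrow> (nat \<Rightarrow> nat) \<Rightarrow> nat set \<Rightarrow> 'a::field linop" is EI
  by (rule linear_op_EI)
lift_definition lmu :: "nat set \<Rightarrow> 'a::field \<Rightarrow> 'a linop" is muI by (rule linear_op_muI)

definition in_salg :: "nat set \<Rightarrow> 'a::field linop \<Rightarrow> bool" where
  "in_salg J A \<longleftrightarrow> Rep_linop A \<in> salg J"

lemma in_salg_one: "in_salg J 1"
  by (simp add: in_salg_def Rep_linop_one salg.one)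

lemma in_salg_times: "in_salg J A \<Longrightarrow> in_salg J B \<Longrightarrow> in_salg J (A * B)"
  by (simp add: in_salg_def Rep_linop_times salg.mult)

lemma in_salg_diff: "in_salg J A \<Longrightarrow> in_salg J B \<Longrightarrow> in_salg J (A - B)"
  unfolding in_salg_def by transfer (rule salg_opsub)

lemma in_salg_mono: "in_salg J A \<Longrightarrow> J \<subseteq> K \<Longrightarrow> in_salg K A"
  by (auto simp: in_salg_def intro: salg_mono)

lemma in_salg_lX: "i \<in> J \<Longrightarrow> in_salg J (lX i)"
  unfolding in_salg_def by transfer (rule salg.genx)

lemma in_salg_lY: "i \<in> J \<Longrightarrow> in_salg J (lY i)"
  unfolding in_salg_def by transfer (rule salg.geny)

lemma in_salg_lE: "i \<in> J \<Longrightarrow> in_salg J (lE i k l)"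
  unfolding in_salg_def by transfer (rule salg_Est)

lemma in_salg_lEI: "finite I \<Longrightarrow> I \<subseteq> J \<Longrightarrow> in_salg J (lEI \<alpha> \<beta> I)"
  unfolding in_salg_def by transfer (rule salg_EI)

lemma in_salg_lmu: "finite I \<Longrightarrow> I \<subseteq> J \<Longrightarrow> in_salg J (lmu I c)"
  unfolding in_salg_def by transfer (rule salg_muI)

lemma in_salg_disjoint_commute: "in_salg J A \<Longrightarrow> in_salg K B \<Longrightarrow> J \<inter> K = {} \<Longrightarrow> A * B = B * A"
  unfolding in_salg_def by (metis salg_disjoint_commute Rep_linop_inject Rep_linop_times)

lemma lY_times_lX: "lY i * lX i = (1 :: 'a::field linop)"
  by transfer (auto simp: Xop_def Yop_def fun_eq_iff)

lemma lE_00: "lE i 0 0 = 1 - lX i * lY i"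
  by transfer (simp add: Est_def opsub_def)

lemma lE_times_lE: "lE i k l * lE i k' l' = (if l = k' then lE i k l' else 0)"
  by transfer (auto simp: Est_apply fun_eq_iff)

lemma lEI_times_lEI:
  assumes "finite I"
  shows "lEI \<alpha> \<beta> I * lEI \<gamma> \<delta> I = (if \<forall>j\<in>I. \<beta> j = \<gamma> j then lEI \<alpha> \<delta> I else 0)"
proof (transfer fixing: I)
  fix \<alpha> \<beta> \<gamma> \<delta> :: "nat \<Rightarrow> nat"
  have "(\<lambda>j. if j \<in> I then \<delta> j else (if j \<in> I then \<beta> j else g j)) = (\<lambda>j. if j \<in> I then \<delta> j else g j)"
    for g :: "nat \<Rightarrow> nat" by auto
  with assms show "(EI \<alpha> \<beta> I :: 'a sop) \<circ> EI \<gamma> \<delta> I = (if \<forall>j\<in>I. \<beta> j = \<gamma> j then EI \<alpha> \<delta> I else (\<lambda>f \<alpha>. 0))"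
    by (auto simp: EI_apply fun_eq_iff)
qed

lemma lEI_insert:
  assumes "finite I" "n \<notin> I"
  shows "lEI \<alpha> \<beta> (insert n I) = lEI \<alpha> \<beta> I * lE n (\<alpha> n) (\<beta> n)"
proof (transfer fixing: I n)
  fix \<alpha> \<beta> :: "nat \<Rightarrow> nat"
  have override: "(\<lambda>j. if j \<in> I then \<beta> j else g j)(n := \<beta> n) = (\<lambda>j. if j \<in> insert n I then \<beta> j else g j)"
    for g :: "nat \<Rightarrow> nat" by auto
  show "(EI \<alpha> \<beta> (insert n I) :: 'a sop) = EI \<alpha> \<beta> I \<circ> Est (\<alpha> n) (\<beta> n) n"
    using assms by (intro ext) (auto simp: EI_apply Est_apply override)
qed

lemma lmu_times_lmu: "finite J \<Longrightarrow> lmu J c * lmu J d = lmu J (c * d)"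
  by transfer (auto simp: muI_def opadd_def opsmult_def opsub_def eI_apply fun_eq_iff)

lemma lmu_1: "lmu J 1 = 1"
  by transfer (simp add: muI_def opadd_def opsmult_def opsub_def fun_eq_iff)

section \<open>Membership in E_oo(S_{n-1})\<close>

lemma Einf_n_comp: "g \<in> Einf_n n \<Longrightarrow> h \<in> Einf_n n \<Longrightarrow> g \<circ> h \<in> Einf_n n"
  unfolding Einf_n_def by (rule gen_grp_comp)

lemma Einf_n_generator:
  "in_salg {1..<n} A \<Longrightarrow> k \<noteq> l \<Longrightarrow> Rep_linop (1 + A * lE n k l) \<in> (Einf_n n :: 'a::field sop set)"
  unfolding Einf_n_def in_salg_def
  by (rule gen_grp_generator) (auto simp: Rep_linop_plus Rep_linop_one Rep_linop_times lE.rep_eq)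

lemma in_salg_commute_lE: "in_salg {1..<n} A \<Longrightarrow> lE n a b * A = A * lE n a b"
  by (rule in_salg_disjoint_commute[OF in_salg_lE[of n "{n}"]]) auto

lemma elementary_subgroup_Einf_n:
  "elementary_subgroup (lE n) {A. in_salg {1..<n} A} {A. Rep_linop A \<in> (Einf_n n :: 'a::field sop set)}"
  by unfold_locales
    (auto simp: lE_times_lE in_salg_commute_lE in_salg_one in_salg_diff Einf_n_generator
      Rep_linop_times Einf_n_comp)

lemma Rep_linop_lmu_corner:
  assumes "finite J" "i \<notin> J" "n \<notin> J" "i \<noteq> n"
  shows "Rep_linop (1 + (lmu J c - 1) * lE i 0 0 * lE n 0 0) = muI (insert i (insert n J)) c"
proof -
  have "opadd id (opsub (muI J c) id \<circ> Est 0 0 i \<circ> Est 0 0 n) f \<gamma> = muI (insert i (insert n J)) c f \<gamma>"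
    for f :: "(nat \<Rightarrow> nat) \<Rightarrow> 'a" and \<gamma>
    using assms
    by (auto simp: muI_def opadd_def opsmult_def opsub_def eI_apply Est_apply fun_upd_idem algebra_simps)
  then show ?thesis
    by (simp add: Rep_linop_plus Rep_linop_one Rep_linop_times minus_linop.rep_eq lmu.rep_eq lE.rep_eq fun_eq_iff)
qed

lemma UI_subset_Einf_n:
  assumes "I \<subseteq> {1..n}" "n \<in> I" "2 \<le> card I"
  shows "UI I \<subseteq> (Einf_n n :: 'a::field sop set)"
proof
  fix g :: "'a sop" assume "g \<in> UI I"
  then obtain c where g: "g = muI I c" and "c \<noteq> 0" unfolding UI_def by blast
  have "finite I" using assms(1) finite_subset by blast
  have "\<not> I \<subseteq> {n}"
    using card_mono[of "{n}" I] assms(3) by auto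
  then obtain i where i: "i \<in> I" "i \<noteq> n" by blast
  define J where "J = I - {i, n}"
  have "finite J" "J \<subseteq> {1..<n}" "i \<in> {1..<n}"
    using \<open>finite I\<close> assms(1) i unfolding J_def by auto
  interpret E: elementary_subgroup "lE n" "{A. in_salg {1..<n} A}" "{A. Rep_linop A \<in> (Einf_n n :: 'a sop set)}"
    by (rule elementary_subgroup_Einf_n)
  have R: "in_salg {1..<n} (lX i)" "in_salg {1..<n} (lY i)"
    "in_salg {1..<n} (lmu J c)" "in_salg {1..<n} (lmu J (1 / c))"
    using \<open>i \<in> {1..<n}\<close> \<open>finite J\<close> \<open>J \<subseteq> {1..<n}\<close> by (auto intro: in_salg_lX in_salg_lY in_salg_lmu)
  have "in_salg J (lmu J c)" "in_salg J (lmu J (1 / c))" "in_salg {i} (lX i)" "in_salg {i} (lY i)"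
    using \<open>finite J\<close> by (auto intro: in_salg_lX in_salg_lY in_salg_lmu)
  moreover have "J \<inter> {i} = {}" unfolding J_def by blast
  ultimately have commute: "lmu J c * lX i = lX i * lmu J c" "lmu J c * lY i = lY i * lmu J c"
    "lmu J (1 / c) * lX i = lX i * lmu J (1 / c)" "lmu J (1 / c) * lY i = lY i * lmu J (1 / c)"
    by (auto intro: in_salg_disjoint_commute)
  have inverse: "lmu J c * lmu J (1 / c) = 1" "lmu J (1 / c) * lmu J c = 1"
    using \<open>finite J\<close> \<open>c \<noteq> 0\<close> by (simp_all add: lmu_times_lmu lmu_1)
  have "Rep_linop (1 + (lmu J c - 1) * lE i 0 0 * lE n 0 0) \<in> Einf_n n"
    unfolding lE_00[of i] using R commute inverse lY_times_lX
    by (intro E.corner_in_G[of "lX i" "lY i" "lmu J c" "lmu J (1 / c)" 0 2 1, simplified]) auto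
  moreover have "I = insert i (insert n J)" using i assms(2) unfolding J_def by auto
  ultimately show "g \<in> Einf_n n"
    using Rep_linop_lmu_corner[OF \<open>finite J\<close>, of i n c] i unfolding g J_def by auto
qed

lemma inv_Rep_linop: "A * B = 1 \<Longrightarrow> B * A = 1 \<Longrightarrow> inv (Rep_linop A) = Rep_linop B"
  by (rule inv_unique_comp) (simp_all flip: Rep_linop_times add: Rep_linop_one)

lemma Rep_linop_EI_generator:
  "a \<in> salg J \<Longrightarrow> Rep_linop (1 + Abs_linop a * lEI \<alpha> \<beta> I) = opadd id (a \<circ> EI \<alpha> \<beta> I)"
  by (simp add: Rep_linop_plus Rep_linop_one Rep_linop_times Rep_linop_Abs_salg lEI.rep_eq)

text \<open>With V = E_\<beta>\<beta>(I') and B = A E_\<alpha>\<beta>(I') one has B V = B, and V B = 0 because \<alpha> and \<beta>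
  differ on I'.\<close>

lemma diagonal_EI_generator_in_Einf_n:
  fixes A :: "'a::field linop"
  assumes "finite I'" "I' \<subseteq> {1..<n}" "\<exists>j\<in>I'. \<alpha> j \<noteq> \<beta> j"
    and "in_salg K A" "K \<inter> I' = {}" "in_salg {1..<n} A"
  shows "Rep_linop (1 + A * lEI \<alpha> \<beta> I' * lE n m m) \<in> Einf_n n"
proof -
  interpret E: elementary_subgroup "lE n" "{A. in_salg {1..<n} A}" "{A. Rep_linop A \<in> (Einf_n n :: 'a sop set)}"
    by (rule elementary_subgroup_Einf_n)
  have lEI: "in_salg {1..<n} (lEI \<gamma> \<delta> I')" for \<gamma> \<delta>
    using assms(1,2) by (rule in_salg_lEI)
  have "lEI \<beta> \<beta> I' * lEI \<alpha> \<beta> I' = 0" using assms(1,3) by (auto simp: lEI_times_lEI)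
  moreover have "lEI \<beta> \<beta> I' * A = A * lEI \<beta> \<beta> I'"
    using assms(4) in_salg_lEI[OF assms(1) order_refl] assms(5)
    by (rule in_salg_disjoint_commute[symmetric])
  ultimately have "lEI \<beta> \<beta> I' * (A * lEI \<alpha> \<beta> I') = 0"
    by (metis mult.assoc mult_zero_right)
  moreover have "(A * lEI \<alpha> \<beta> I') * lEI \<beta> \<beta> I' = A * lEI \<alpha> \<beta> I'"
    using assms(1) by (simp add: mult.assoc lEI_times_lEI)
  ultimately have "1 + A * lEI \<alpha> \<beta> I' * lE n m m \<in> {A. Rep_linop A \<in> Einf_n n}"
    using in_salg_times[OF assms(6) lEI] lEI
    by (intro E.nilpotent_corner_in_G[where k = "Suc m"]) auto
  then show ?thesis by simp
qed

lemma EI_generator_in_Einf_n: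
  fixes a :: "'a::field sop"
  assumes I: "I \<subseteq> {1..n}" "n \<in> I" and a: "a \<in> salg ({1..n} - I)" and "\<exists>j\<in>I. \<alpha> j \<noteq> \<beta> j"
  shows "opadd id (a \<circ> EI \<alpha> \<beta> I) \<in> Einf_n n"
proof -
  define I' where "I' = I - {n}"
  define A where "A = Abs_linop a"
  have "finite I'" "I' \<subseteq> {1..<n}" "n \<notin> I'" using I finite_subset unfolding I'_def by fastforce+
  have "in_salg ({1..n} - I) A" using a by (simp add: A_def in_salg_def Rep_linop_Abs_salg)
  moreover have "{1..n} - I \<subseteq> {1..<n}" using I(2) by (auto simp: order_le_less)
  ultimately have A: "in_salg {1..<n} A" by (rule in_salg_mono)
  have lEI: "in_salg {1..<n} (lEI \<gamma> \<delta> I')" for \<gamma> \<delta>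
    using \<open>finite I'\<close> \<open>I' \<subseteq> {1..<n}\<close> by (rule in_salg_lEI)
  have split: "lEI \<alpha> \<beta> I = lEI \<alpha> \<beta> I' * lE n (\<alpha> n) (\<beta> n)"
    using lEI_insert[OF \<open>finite I'\<close> \<open>n \<notin> I'\<close>] I(2) by (simp add: I'_def insert_absorb)
  have "opadd id (a \<circ> EI \<alpha> \<beta> I) = Rep_linop (1 + A * lEI \<alpha> \<beta> I' * lE n (\<alpha> n) (\<beta> n))"
    by (simp add: A_def mult.assoc Rep_linop_EI_generator[OF a] flip: split)
  moreover have "Rep_linop (1 + A * lEI \<alpha> \<beta> I' * lE n (\<alpha> n) (\<beta> n)) \<in> Einf_n n"
  proof (cases "\<alpha> n = \<beta> n")
    case False
    then show ?thesis by (intro Einf_n_generator in_salg_times A lEI)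
  next
    case True
    moreover have "\<exists>j\<in>I'. \<alpha> j \<noteq> \<beta> j" using assms(4) True unfolding I'_def by (metis DiffI singletonD)
    moreover have "({1..n} - I) \<inter> I' = {}" unfolding I'_def by blast
    ultimately show ?thesis
      using diagonal_EI_generator_in_Einf_n[OF \<open>finite I'\<close> \<open>I' \<subseteq> {1..<n}\<close> _
          \<open>in_salg ({1..n} - I) A\<close> _ A]
      by simp
  qed
  ultimately show ?thesis by simp
qed

lemma inv_EI_generator:
  fixes a :: "'a::field sop"
  assumes "finite I" "a \<in> salg J" "J \<inter> I = {}" "\<exists>j\<in>I. \<alpha> j \<noteq> \<beta> j"
  shows "inv (opadd id (a \<circ> EI \<alpha> \<beta> I)) = opadd id (opsmult (-1) a \<circ> EI \<alpha> \<beta> I)"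
proof -
  define N where "N = Abs_linop a * lEI \<alpha> \<beta> I"
  have "Abs_linop a * lEI \<alpha> \<beta> I = lEI \<alpha> \<beta> I * Abs_linop a"
    using assms(2) by (intro in_salg_disjoint_commute[OF _ in_salg_lEI[OF assms(1) order_refl] assms(3)])
      (simp add: in_salg_def Rep_linop_Abs_salg)
  then have "N * N = Abs_linop a * Abs_linop a * (lEI \<alpha> \<beta> I * lEI \<alpha> \<beta> I)"
    unfolding N_def by (metis mult.assoc)
  also have "\<dots> = 0" using assms(1,4) by (auto simp: lEI_times_lEI)
  finally have "(1 + N) * (1 - N) = 1" "(1 - N) * (1 + N) = 1"
    by (simp_all add: algebra_simps)
  then have "inv (Rep_linop (1 + N)) = Rep_linop (1 - N)" by (rule inv_Rep_linop)
  also have "1 - N = 1 + Abs_linop (opsmult (-1) a) * lEI \<alpha> \<beta> I"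
    using assms(2) unfolding N_def
    by (metis Rep_linop_Abs_salg Rep_linop_inverse Rep_linop_uminus diff_conv_add_uminus mult_minus_left)
  finally show ?thesis
    by (simp add: N_def Rep_linop_EI_generator[OF assms(2)] Rep_linop_EI_generator[OF salg.smult[OF assms(2)]])
qed

lemma Einf_C_subset_Einf_n:
  assumes "I \<subseteq> {1..n}" "n \<in> I"
  shows "(Einf_C n I :: 'a::field sop set) \<subseteq> Einf_n n"
proof -
  have "finite I" using assms(1) finite_subset by blast
  have "g \<in> Einf_n n \<and> inv g \<in> Einf_n n"
    if gen: "g \<in> {opadd id (a \<circ> EI \<alpha> \<beta> I) | a \<alpha> \<beta>. a \<in> salg ({1..n} - I) \<and> (\<exists>i\<in>I. \<alpha> i \<noteq> \<beta> i)}"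
    for g :: "'a sop"
  proof -
    obtain a \<alpha> \<beta> where g: "g = opadd id (a \<circ> EI \<alpha> \<beta> I)"
      and a: "a \<in> salg ({1..n} - I)" and \<alpha>\<beta>: "\<exists>i\<in>I. \<alpha> i \<noteq> \<beta> i"
      using gen by blast
    have "inv g = opadd id (opsmult (-1) a \<circ> EI \<alpha> \<beta> I)"
      unfolding g using \<open>finite I\<close> a _ \<alpha>\<beta> by (rule inv_EI_generator) blast
    then show ?thesis
      unfolding g using assms a \<alpha>\<beta> by (simp add: EI_generator_in_Einf_n salg.smult)
  qed
  then show ?thesis unfolding Einf_C_def Einf_n_def by (rule gen_grp_subset)
qed

lemma tildeE_subset_Einf_n:
  assumes "\<And>I. I \<in> set Is \<Longrightarrow>
    UI I \<subseteq> (Einf_n n :: 'a::field sop set) \<and> (Einf_C n I :: 'a sop set) \<subseteq> Einf_n n"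
  shows "(tildeE n Is :: 'a sop set) \<subseteq> Einf_n n"
proof
  fix x :: "'a sop" assume "x \<in> tildeE n Is"
  then obtain g where x: "x = foldr (\<circ>) (map g Is) id"
    and g: "\<forall>I\<in>set Is. g I \<in> {u \<circ> v | u v. u \<in> UI I \<and> v \<in> Einf_C n I}"
    unfolding tildeE_def by blast
  have "g I \<in> Einf_n n" if "I \<in> set Is" for I
  proof -
    have "g I \<in> {u \<circ> v | u v. u \<in> UI I \<and> v \<in> Einf_C n I}" using g that by (rule bspec)
    then obtain u v where "g I = u \<circ> v" "u \<in> UI I" "v \<in> Einf_C n I" by (auto simp only: mem_Collect_eq)
    with assms[OF that] show ?thesis by (metis Einf_n_comp subsetD)
  qed
  then show "x \<in> Einf_n n" unfolding x Einf_n_def by (rule gen_grp_foldr_comp)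
qed

theorem lemma3p2:
  fixes n s :: nat
  assumes "3 \<le> n" and "2 \<le> s" and "s \<le> n - 1"
  shows "(\<forall>I. I \<subseteq> {1..n} \<and> card I = s \<and> n \<in> I \<longrightarrow>
            UI I \<subseteq> (Einf_n n :: 'a::field sop set) \<and> (Einf_C n I :: 'a sop set) \<subseteq> Einf_n n)
       \<and> (\<forall>Is. distinct Is \<and> set Is = {I. I \<subseteq> {1..n} \<and> card I = s \<and> n \<in> I} \<longrightarrow>
            (tildeE n Is :: 'a sop set) \<subseteq> Einf_n n)"
proof -
  have factors: "UI I \<subseteq> (Einf_n n :: 'a sop set) \<and> (Einf_C n I :: 'a sop set) \<subseteq> Einf_n n"
    if "I \<subseteq> {1..n} \<and> card I = s \<and> n \<in> I" for I
    using that assms(2) by (simp add: UI_subset_Einf_n Einf_C_subset_Einf_n)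
  show ?thesis
  proof (intro conjI allI impI)
    fix I assume "I \<subseteq> {1..n} \<and> card I = s \<and> n \<in> I"
    from factors[OF this] show "UI I \<subseteq> (Einf_n n :: 'a sop set)" "(Einf_C n I :: 'a sop set) \<subseteq> Einf_n n"
      by simp_all
  next
    fix Is :: "nat set list" assume "distinct Is \<and> set Is = {I. I \<subseteq> {1..n} \<and> card I = s \<and> n \<in> I}"
    then show "(tildeE n Is :: 'a sop set) \<subseteq> Einf_n n" by (intro tildeE_subset_Einf_n factors) simp
  qed
qed

end
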